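(* Let $R_1,R_2,S_1,S_2\in\mathfrak{P}$. If $R_1\sqsubseteq_\Gamma S_1$ and $R_2\sqsubseteq_\Gamma S_2$ with respect to $\mathfrak{P}$, then $R_1\oplus R_2\sqsubseteq_\Gamma S_1\oplus S_2$ with respect to $\mathfrak{P}$. Here $\oplus$ denotes the ordinal sum of posets, in which every element of the first summand is placed below every element of the second.
   Context: **Digraphs and homomorphisms.** - A digraph $G$ is a pair $(V(G),A(G))$, where $V(G)$ is a finite non-empty set and $A(G)\subseteq V(G)\times V(G)$. Arcs are written $vw$. - $\mathfrak{P}$ is the class of finite posets, i.e. reflexive, antisymmetric, transitive digraphs. - A homomorphism $\xi:G\to H$ is a map $V(G)\to V(H)$ with $\xi(v)\xi(w)\in A(H)$ for all $vw\in A(G)$. $\mathcal{H}(G,H)$ is the set of homomorphisms. **Connectivity.** - Two vertices $u,w$ are adjacent if $uw\in A(G)$ or $wu\in A(G)$. - For $X\subseteq V(G)$ and $v,w\in X$, the vertices $v$ and $w$ are connected in $X$ if $v=w$, or if there are $z_0=v,\dots,z_I=w$ in $X$ with consecutive terms adjacent. - $\gamma_X(v)$ is the set of such $w$. - $\Gamma_\xi(v)=\gamma_{\xi^{-1}(\xi(v))}(v)$. **Schemes.** - $\mathfrak{P}_r$ is a fixed system of representatives of $\mathfrak{P}$ up to isomorphism. - $R\sqsubseteq_\Gamma S$ with respect to $\mathfrak{P}$ means there exist injective maps $\rho_G:\mathcal{H}(G,R)\to\mathcal{H}(G,S)$, $G\in\mathfrak{P}_r$, with $\Gamma_{\rho_G(\xi)}(v)=\Gamma_\xi(v)$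 for all $G\in\mathfrak{P}_r$, $\xi\in\mathcal{H}(G,R)$ and $v\in V(G)$. *)

theory Defs
  imports "HOL-Library.FuncSet"
begin

type_synonym 'a digraph = "'a set \<times> ('a \<times> 'a) set"

definition verts :: "'a digraph \<Rightarrow> 'a set" where "verts G = fst G"
definition arcs :: "'a digraph \<Rightarrow> ('a \<times> 'a) set" where "arcs G = snd G"

definition is_digraph :: "'a digraph \<Rightarrow> bool" where
  "is_digraph G \<longleftrightarrow> finite (verts G) \<and> verts G \<noteq> {} \<and> arcs G \<subseteq> verts G \<times> verts G"

definition is_poset :: "'a digraph \<Rightarrow> bool" where
  "is_poset G \<longleftrightarrow> is_digraph G
     \<and> (\<forall>v\<in>verts G. (v, v) \<in> arcs G)
     \<and> (\<forall>v w. (v, w) \<in> arcs G \<and> (w, v) \<in> arcs G \<longrightarrow> v = w)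
     \<and> (\<forall>u v w. (u, v) \<in> arcs G \<and> (v, w) \<in> arcs G \<longrightarrow> (u, w) \<in> arcs G)"

definition homs :: "'a digraph \<Rightarrow> 'b digraph \<Rightarrow> ('a \<Rightarrow> 'b) set" where
  "homs G H = {\<xi> \<in> verts G \<rightarrow>\<^sub>E verts H. \<forall>(v, w) \<in> arcs G. (\<xi> v, \<xi> w) \<in> arcs H}"

definition adj :: "'a digraph \<Rightarrow> ('a \<times> 'a) set" where
  "adj G = arcs G \<union> (arcs G)\<inverse>"

definition gamma :: "'a digraph \<Rightarrow> 'a set \<Rightarrow> 'a \<Rightarrow> 'a set" where
  "gamma G X v = {w \<in> X. v \<in> X \<and> (v, w) \<in> (adj G \<inter> (X \<times> X))\<^sup>*}"

definition Gamma :: "'a digraph \<Rightarrow> ('a \<Rightarrow> 'b) \<Rightarrow> 'a \<Rightarrow> 'a set" where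
  "Gamma G \<xi> v = gamma G {u \<in> verts G. \<xi> u = \<xi> v} v"

text \<open>Every finite poset
  is isomorphic to one on a subset of nat, so the posets on nat contain a system of
  representatives; since the maps \<rho>_G are chosen independently for each G and the condition
  is invariant under isomorphism of G, quantifying over all posets on nat is equivalent.\<close>
definition scheme_le :: "'a digraph \<Rightarrow> 'b digraph \<Rightarrow> bool" where
  "scheme_le R S \<longleftrightarrow>
     (\<forall>G :: nat digraph. is_poset G \<longrightarrow>
        (\<exists>\<rho>. inj_on \<rho> (homs G R) \<and> \<rho> ` homs G R \<subseteq> homs G S
             \<and> (\<forall>\<xi>\<in>homs G R. \<forall>v\<in>verts G. Gamma G (\<rho> \<xi>) v = Gamma G \<xi> v)))"

definition ordinal_sum :: "'a digraph \<Rightarrow> 'b digraph \<Rightarrow> ('a + 'b) digraph" where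
  "ordinal_sum P Q =
     (Inl ` verts P \<union> Inr ` verts Q,
      (map_prod Inl Inl ` arcs P) \<union> (map_prod Inr Inr ` arcs Q)
        \<union> {(Inl x, Inr y) | x y. x \<in> verts P \<and> y \<in> verts Q})"

end

theory Submission
  imports Defs
begin

text \<open>A homomorphism \<open>\<xi>\<close> from \<open>G\<close> to \<open>R\<^sub>1 \<oplus> R\<^sub>2\<close> is the same as a down-set \<open>L\<close> of \<open>G\<close>
  (the vertices mapped into \<open>R\<^sub>1\<close>) together with homomorphisms from the induced subdigraphs
  on \<open>L\<close> and on its complement into \<open>R\<^sub>1\<close> and \<open>R\<^sub>2\<close>. The fibres of \<open>\<xi>\<close> lie inside \<open>L\<close> or
  inside its complement, and connectivity within a fibre only involves arcs of the induced
  subdigraph, so \<open>\<Gamma>\<close> is computed componentwise. Applying the given maps on the two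
  induced subdigraphs (which are again posets, or empty) and gluing along the same \<open>L\<close>
  therefore yields an injective \<open>\<Gamma>\<close>-preserving map into \<open>S\<^sub>1 \<oplus> S\<^sub>2\<close>.\<close>

definition Gamma_preserving ::
    "'v digraph \<Rightarrow> 'a digraph \<Rightarrow> 'b digraph \<Rightarrow> (('v \<Rightarrow> 'a) \<Rightarrow> 'v \<Rightarrow> 'b) \<Rightarrow> bool" where
  "Gamma_preserving G R S \<rho> \<longleftrightarrow>
     inj_on \<rho> (homs G R) \<and> \<rho> ` homs G R \<subseteq> homs G S
     \<and> (\<forall>\<xi>\<in>homs G R. \<forall>v\<in>verts G. Gamma G (\<rho> \<xi>) v = Gamma G \<xi> v)"

lemma scheme_le_iff_Gamma_preserving:
  "scheme_le R S \<longleftrightarrow> (\<forall>G :: nat digraph. is_poset G \<longrightarrow> (\<exists>\<rho>. Gamma_preserving G R S \<rho>))"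
  by (simp add: scheme_le_def Gamma_preserving_def)

lemma homs_empty_digraph: "homs ({}, {}) R = {\<lambda>_. undefined}"
  by (auto simp: homs_def verts_def arcs_def)

lemma Gamma_preserving_empty_digraph: "Gamma_preserving ({}, {}) R S (\<lambda>_ _. undefined)"
  by (simp add: Gamma_preserving_def homs_empty_digraph verts_def)

text \<open>The empty digraph is not a poset, but the induced subdigraph on an empty down-set
  has to be covered as well.\<close>

lemma scheme_le_choice:
  assumes "scheme_le R S"
  obtains \<rho> where "\<And>G :: nat digraph. is_poset G \<or> G = ({}, {}) \<Longrightarrow> Gamma_preserving G R S (\<rho> G)"
proof -
  have "\<exists>\<rho>. is_poset G \<or> G = ({}, {}) \<longrightarrow> Gamma_preserving G R S \<rho>" for G :: "nat digraph"
  proof (cases "is_poset G")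
    case True
    then show ?thesis
      using assms unfolding scheme_le_iff_Gamma_preserving by blast
  next
    case False
    then show ?thesis
      using Gamma_preserving_empty_digraph[of R S] by blast
  qed
  then have "\<exists>\<rho>. \<forall>G :: nat digraph. is_poset G \<or> G = ({}, {}) \<longrightarrow> Gamma_preserving G R S (\<rho> G)"
    by (intro choice allI)
  with that show thesis
    by blast
qed

definition induced :: "'a digraph \<Rightarrow> 'a set \<Rightarrow> 'a digraph" where
  "induced G X = (X, arcs G \<inter> X \<times> X)"

lemma verts_induced [simp]: "verts (induced G X) = X"
  by (simp add: induced_def verts_def)

lemma arcs_induced [simp]: "arcs (induced G X) = arcs G \<inter> X \<times> X"
  by (simp add: induced_def arcs_def)

lemma induced_empty [simp]: "induced G {} = ({}, {})"
  by (simp add: induced_def)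

lemma is_poset_induced:
  assumes "is_poset G" "X \<subseteq> verts G" "X \<noteq> {}"
  shows "is_poset (induced G X)"
proof -
  have "finite X"
    using assms(1,2) finite_subset by (auto simp: is_poset_def is_digraph_def)
  with assms show ?thesis
    unfolding is_poset_def is_digraph_def arcs_induced verts_induced by blast
qed

lemma Gamma_eq_Gamma_induced:
  assumes "X \<subseteq> verts G" "v \<in> X"
    and fibre: "\<And>u. u \<in> verts G \<Longrightarrow> \<xi> u = \<xi> v \<longleftrightarrow> u \<in> X \<and> f u = f v"
  shows "Gamma G \<xi> v = Gamma (induced G X) f v"
proof -
  have fibres: "{u \<in> verts G. \<xi> u = \<xi> v} = {u \<in> X. f u = f v}"
    using assms by auto
  have "adj (induced G X) \<inter> Y \<times> Y = adj G \<inter> Y \<times> Y" if "Y \<subseteq> X" for Y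
    using that by (auto simp: adj_def)
  then show ?thesis
    unfolding Gamma_def gamma_def fibres by auto
qed

lemma verts_ordinal_sum: "verts (ordinal_sum P Q) = Inl ` verts P \<union> Inr ` verts Q"
  by (simp add: ordinal_sum_def verts_def)

lemma arcs_ordinal_sum_simps [simp]:
  "(Inl a, Inl b) \<in> arcs (ordinal_sum P Q) \<longleftrightarrow> (a, b) \<in> arcs P"
  "(Inr c, Inr d) \<in> arcs (ordinal_sum P Q) \<longleftrightarrow> (c, d) \<in> arcs Q"
  "(Inl a, Inr d) \<in> arcs (ordinal_sum P Q) \<longleftrightarrow> a \<in> verts P \<and> d \<in> verts Q"
  "(Inr c, Inl b) \<notin> arcs (ordinal_sum P Q)"
  by (auto simp: ordinal_sum_def arcs_def)

lemma homs_vertsD: "\<xi> \<in> homs G H \<Longrightarrow> u \<in> verts G \<Longrightarrow> \<xi> u \<in> verts H"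
  by (auto simp: homs_def)

lemma homs_arcsD: "\<xi> \<in> homs G H \<Longrightarrow> (u, w) \<in> arcs G \<Longrightarrow> (\<xi> u, \<xi> w) \<in> arcs H"
  by (auto simp: homs_def)

lemma homs_restrict: "\<xi> \<in> homs G H \<Longrightarrow> restrict \<xi> (verts G) = \<xi>"
  by (simp add: homs_def PiE_def extensional_restrict)

lemma homs_undefined: "\<xi> \<in> homs G H \<Longrightarrow> u \<notin> verts G \<Longrightarrow> \<xi> u = undefined"
  by (auto simp: homs_def)

definition lower :: "'v digraph \<Rightarrow> ('v \<Rightarrow> 'a + 'b) \<Rightarrow> 'v set" where
  "lower G \<xi> = {u \<in> verts G. isl (\<xi> u)}"

definition lower_map :: "'v digraph \<Rightarrow> ('v \<Rightarrow> 'a + 'b) \<Rightarrow> 'v \<Rightarrow> 'a" where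
  "lower_map G \<xi> = restrict (projl \<circ> \<xi>) (lower G \<xi>)"

definition upper_map :: "'v digraph \<Rightarrow> ('v \<Rightarrow> 'a + 'b) \<Rightarrow> 'v \<Rightarrow> 'b" where
  "upper_map G \<xi> = restrict (projr \<circ> \<xi>) (verts G - lower G \<xi>)"

definition glue :: "'v digraph \<Rightarrow> 'v set \<Rightarrow> ('v \<Rightarrow> 'a) \<Rightarrow> ('v \<Rightarrow> 'b) \<Rightarrow> 'v \<Rightarrow> 'a + 'b" where
  "glue G L f g = restrict (\<lambda>u. if u \<in> L then Inl (f u) else Inr (g u)) (verts G)"

lemma lower_subset: "lower G \<xi> \<subseteq> verts G"
  by (auto simp: lower_def)

lemma lower_down_closed:
  assumes "\<xi> \<in> homs G (ordinal_sum P Q)" "arcs G \<subseteq> verts G \<times> verts G"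
    and "(u, w) \<in> arcs G" "w \<in> lower G \<xi>"
  shows "u \<in> lower G \<xi>"
proof -
  have "(\<xi> u, \<xi> w) \<in> arcs (ordinal_sum P Q)"
    using assms(1,3) by (rule homs_arcsD)
  then have "isl (\<xi> u)"
    using assms(4) by (cases "\<xi> u"; cases "\<xi> w") (auto simp: lower_def)
  then show ?thesis
    using assms(2,3) by (auto simp: lower_def)
qed

lemma lower_map_in_homs:
  assumes "\<xi> \<in> homs G (ordinal_sum P Q)"
  shows "lower_map G \<xi> \<in> homs (induced G (lower G \<xi>)) P"
proof -
  have "\<xi> u = Inl (lower_map G \<xi> u)" if "u \<in> lower G \<xi>" for u
    using that by (auto simp: lower_map_def lower_def)
  note Inl = this
  have "lower_map G \<xi> u \<in> verts P" if "u \<in> lower G \<xi>" for u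
    using homs_vertsD[OF assms subsetD[OF lower_subset that]] Inl[OF that]
    by (auto simp: verts_ordinal_sum)
  moreover have "(lower_map G \<xi> u, lower_map G \<xi> w) \<in> arcs P"
    if "(u, w) \<in> arcs G" "u \<in> lower G \<xi>" "w \<in> lower G \<xi>" for u w
    using homs_arcsD[OF assms that(1)] Inl[OF that(2)] Inl[OF that(3)] by simp
  moreover have "lower_map G \<xi> \<in> extensional (lower G \<xi>)"
    by (simp add: lower_map_def)
  ultimately show ?thesis
    by (auto simp: homs_def PiE_iff)
qed

lemma upper_map_in_homs:
  assumes "\<xi> \<in> homs G (ordinal_sum P Q)"
  shows "upper_map G \<xi> \<in> homs (induced G (verts G - lower G \<xi>)) Q"
proof -
  have "\<xi> u = Inr (upper_map G \<xi> u)" if "u \<in> verts G - lower G \<xi>" for u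
    using that by (cases "\<xi> u") (auto simp: upper_map_def lower_def)
  note Inr = this
  have "upper_map G \<xi> u \<in> verts Q" if "u \<in> verts G - lower G \<xi>" for u
    using homs_vertsD[OF assms, of u] Inr[OF that] that
    by (auto simp: verts_ordinal_sum)
  moreover have "(upper_map G \<xi> u, upper_map G \<xi> w) \<in> arcs Q"
    if "(u, w) \<in> arcs G" "u \<in> verts G - lower G \<xi>" "w \<in> verts G - lower G \<xi>" for u w
    using homs_arcsD[OF assms that(1)] Inr[OF that(2)] Inr[OF that(3)] by simp
  moreover have "upper_map G \<xi> \<in> extensional (verts G - lower G \<xi>)"
    by (simp add: upper_map_def)
  ultimately show ?thesis
    by (auto simp: homs_def PiE_iff)
qed

lemma glue_lower_upper:
  assumes "\<xi> \<in> homs G (ordinal_sum P Q)"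
  shows "glue G (lower G \<xi>) (lower_map G \<xi>) (upper_map G \<xi>) = \<xi>"
proof
  fix u
  show "glue G (lower G \<xi>) (lower_map G \<xi>) (upper_map G \<xi>) u = \<xi> u"
    using homs_undefined[OF assms, of u]
    by (cases "\<xi> u") (auto simp: glue_def lower_map_def upper_map_def lower_def)
qed

lemma glue_in_homs:
  assumes "arcs G \<subseteq> verts G \<times> verts G" "L \<subseteq> verts G"
    and down_closed: "\<And>u w. (u, w) \<in> arcs G \<Longrightarrow> w \<in> L \<Longrightarrow> u \<in> L"
    and f: "f \<in> homs (induced G L) P" and g: "g \<in> homs (induced G (verts G - L)) Q"
  shows "glue G L f g \<in> homs G (ordinal_sum P Q)"
proof -
  have "(glue G L f g u, glue G L f g w) \<in> arcs (ordinal_sum P Q)" if "(u, w) \<in> arcs G" for u w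
    using that assms(1) down_closed[OF that] homs_arcsD[OF f, of u w] homs_arcsD[OF g, of u w]
      homs_vertsD[OF f, of u] homs_vertsD[OF g, of w]
    by (cases "u \<in> L"; cases "w \<in> L") (auto simp: glue_def)
  moreover have "glue G L f g u \<in> verts (ordinal_sum P Q)" if "u \<in> verts G" for u
    using that homs_vertsD[OF f, of u] homs_vertsD[OF g, of u]
    by (auto simp: glue_def verts_ordinal_sum)
  moreover have "glue G L f g \<in> extensional (verts G)"
    by (simp add: glue_def)
  ultimately show ?thesis
    by (auto simp: homs_def PiE_iff)
qed

lemma lower_glue: "L \<subseteq> verts G \<Longrightarrow> lower G (glue G L f g) = L"
  by (auto simp: lower_def glue_def)

lemma lower_map_glue: "L \<subseteq> verts G \<Longrightarrow> lower_map G (glue G L f g) = restrict f L"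
  unfolding lower_map_def by (simp add: lower_glue) (auto simp: glue_def subset_iff)

lemma upper_map_glue: "L \<subseteq> verts G \<Longrightarrow> upper_map G (glue G L f g) = restrict g (verts G - L)"
  unfolding upper_map_def by (simp add: lower_glue) (auto simp: glue_def)

lemma Gamma_glue_lower:
  "L \<subseteq> verts G \<Longrightarrow> v \<in> L \<Longrightarrow> Gamma G (glue G L f g) v = Gamma (induced G L) f v"
  by (rule Gamma_eq_Gamma_induced) (auto simp: glue_def)

lemma Gamma_glue_upper:
  "v \<in> verts G - L \<Longrightarrow> Gamma G (glue G L f g) v = Gamma (induced G (verts G - L)) g v"
  by (rule Gamma_eq_Gamma_induced) (auto simp: glue_def)

lemma glue_eqD:
  assumes eq: "glue G L f g = glue G L' f' g'" and "L \<subseteq> verts G" "L' \<subseteq> verts G"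
  shows "L = L'" "restrict f L = restrict f' L" "restrict g (verts G - L) = restrict g' (verts G - L)"
proof -
  show L: "L = L'"
    using arg_cong[OF eq, of "lower G"] assms(2,3) by (simp add: lower_glue)
  show "restrict f L = restrict f' L"
    using arg_cong[OF eq, of "lower_map G"] assms(2) L by (simp add: lower_map_glue)
  show "restrict g (verts G - L) = restrict g' (verts G - L)"
    using arg_cong[OF eq, of "upper_map G"] assms(2) L by (simp add: upper_map_glue)
qed

lemma Gamma_lower_map:
  "\<xi> \<in> homs G (ordinal_sum P Q) \<Longrightarrow> v \<in> lower G \<xi> \<Longrightarrow>
    Gamma G \<xi> v = Gamma (induced G (lower G \<xi>)) (lower_map G \<xi>) v"
  using Gamma_glue_lower[OF lower_subset] glue_lower_upper by metis

lemma Gamma_upper_map: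
  "\<xi> \<in> homs G (ordinal_sum P Q) \<Longrightarrow> v \<in> verts G - lower G \<xi> \<Longrightarrow>
    Gamma G \<xi> v = Gamma (induced G (verts G - lower G \<xi>)) (upper_map G \<xi>) v"
  using Gamma_glue_upper glue_lower_upper by metis

lemma Gamma_preserving_ordinal_sum:
  fixes \<rho>\<^sub>1 :: "'v set \<Rightarrow> ('v \<Rightarrow> 'a) \<Rightarrow> 'v \<Rightarrow> 'c" and \<rho>\<^sub>2 :: "'v set \<Rightarrow> ('v \<Rightarrow> 'b) \<Rightarrow> 'v \<Rightarrow> 'd"
  assumes G: "arcs G \<subseteq> verts G \<times> verts G"
    and \<rho>\<^sub>1: "\<And>X. X \<subseteq> verts G \<Longrightarrow> Gamma_preserving (induced G X) R\<^sub>1 S\<^sub>1 (\<rho>\<^sub>1 X)"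
    and \<rho>\<^sub>2: "\<And>X. X \<subseteq> verts G \<Longrightarrow> Gamma_preserving (induced G X) R\<^sub>2 S\<^sub>2 (\<rho>\<^sub>2 X)"
  defines "\<rho> \<xi> \<equiv> glue G (lower G \<xi>) (\<rho>\<^sub>1 (lower G \<xi>) (lower_map G \<xi>))
                      (\<rho>\<^sub>2 (verts G - lower G \<xi>) (upper_map G \<xi>))"
  shows "Gamma_preserving G (ordinal_sum R\<^sub>1 R\<^sub>2) (ordinal_sum S\<^sub>1 S\<^sub>2) \<rho>"
proof -
  let ?L = "lower G" and ?U = "\<lambda>\<xi>. verts G - lower G \<xi>"
  have hom\<^sub>1: "\<rho>\<^sub>1 (?L \<xi>) (lower_map G \<xi>) \<in> homs (induced G (?L \<xi>)) S\<^sub>1"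
    and hom\<^sub>2: "\<rho>\<^sub>2 (?U \<xi>) (upper_map G \<xi>) \<in> homs (induced G (?U \<xi>)) S\<^sub>2"
    if "\<xi> \<in> homs G (ordinal_sum R\<^sub>1 R\<^sub>2)" for \<xi>
    using \<rho>\<^sub>1[OF lower_subset[of G \<xi>]] \<rho>\<^sub>2[of "?U \<xi>"] lower_map_in_homs[OF that] upper_map_in_homs[OF that]
    by (auto simp: Gamma_preserving_def)
  have inj\<^sub>1: "inj_on (\<rho>\<^sub>1 (?L \<xi>)) (homs (induced G (?L \<xi>)) R\<^sub>1)"
    and inj\<^sub>2: "inj_on (\<rho>\<^sub>2 (?U \<xi>)) (homs (induced G (?U \<xi>)) R\<^sub>2)" for \<xi>
    using \<rho>\<^sub>1[OF lower_subset[of G \<xi>]] \<rho>\<^sub>2[of "?U \<xi>"] by (auto simp: Gamma_preserving_def)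
  have homs: "\<rho> \<xi> \<in> homs G (ordinal_sum S\<^sub>1 S\<^sub>2)" if "\<xi> \<in> homs G (ordinal_sum R\<^sub>1 R\<^sub>2)" for \<xi>
    unfolding \<rho>_def
    using G lower_subset lower_down_closed[OF that G] hom\<^sub>1[OF that] hom\<^sub>2[OF that]
    by (rule glue_in_homs)
  have "inj_on \<rho> (homs G (ordinal_sum R\<^sub>1 R\<^sub>2))"
  proof (rule inj_onI)
    fix \<xi> \<eta>
    assume \<xi>: "\<xi> \<in> homs G (ordinal_sum R\<^sub>1 R\<^sub>2)" and \<eta>: "\<eta> \<in> homs G (ordinal_sum R\<^sub>1 R\<^sub>2)"
      and "\<rho> \<xi> = \<rho> \<eta>"
    note eq = glue_eqD[OF \<open>\<rho> \<xi> = \<rho> \<eta>\<close>[unfolded \<rho>_def] lower_subset lower_subset]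
    then have "\<rho>\<^sub>1 (?L \<xi>) (lower_map G \<xi>) = \<rho>\<^sub>1 (?L \<xi>) (lower_map G \<eta>)"
      using homs_restrict[OF hom\<^sub>1[OF \<xi>]] homs_restrict[OF hom\<^sub>1[OF \<eta>]] by simp
    then have "lower_map G \<xi> = lower_map G \<eta>"
      using inj_onD[OF inj\<^sub>1 _ lower_map_in_homs[OF \<xi>]] lower_map_in_homs[OF \<eta>] eq(1) by simp
    moreover have "\<rho>\<^sub>2 (?U \<xi>) (upper_map G \<xi>) = \<rho>\<^sub>2 (?U \<xi>) (upper_map G \<eta>)"
      using eq homs_restrict[OF hom\<^sub>2[OF \<xi>]] homs_restrict[OF hom\<^sub>2[OF \<eta>]] by simp
    then have "upper_map G \<xi> = upper_map G \<eta>"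
      using inj_onD[OF inj\<^sub>2 _ upper_map_in_homs[OF \<xi>]] upper_map_in_homs[OF \<eta>] eq(1) by simp
    ultimately show "\<xi> = \<eta>"
      using glue_lower_upper[OF \<xi>] glue_lower_upper[OF \<eta>] eq(1) by metis
  qed
  moreover have "Gamma G (\<rho> \<xi>) v = Gamma G \<xi> v"
    if \<xi>: "\<xi> \<in> homs G (ordinal_sum R\<^sub>1 R\<^sub>2)" and v: "v \<in> verts G" for \<xi> v
  proof (cases "v \<in> ?L \<xi>")
    case True
    have "Gamma G (\<rho> \<xi>) v = Gamma (induced G (?L \<xi>)) (\<rho>\<^sub>1 (?L \<xi>) (lower_map G \<xi>)) v"
      unfolding \<rho>_def using lower_subset True by (rule Gamma_glue_lower)
    also have "\<dots> = Gamma (induced G (?L \<xi>)) (lower_map G \<xi>) v"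
      using \<rho>\<^sub>1[OF lower_subset[of G \<xi>]] lower_map_in_homs[OF \<xi>] True
      by (simp add: Gamma_preserving_def)
    finally show ?thesis
      using Gamma_lower_map[OF \<xi> True] by simp
  next
    case False
    with v have U: "v \<in> ?U \<xi>"
      by blast
    have "Gamma G (\<rho> \<xi>) v = Gamma (induced G (?U \<xi>)) (\<rho>\<^sub>2 (?U \<xi>) (upper_map G \<xi>)) v"
      unfolding \<rho>_def using U by (rule Gamma_glue_upper)
    also have "\<dots> = Gamma (induced G (?U \<xi>)) (upper_map G \<xi>) v"
      using \<rho>\<^sub>2[of "?U \<xi>"] upper_map_in_homs[OF \<xi>] U
      by (simp add: Gamma_preserving_def)
    finally show ?thesis
      using Gamma_upper_map[OF \<xi> U] by simp
  qed
  ultimately show ?thesis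
    using homs by (auto simp: Gamma_preserving_def)
qed

theorem scheme_le_ordinal_sum:
  assumes "scheme_le R\<^sub>1 S\<^sub>1" "scheme_le R\<^sub>2 S\<^sub>2"
  shows "scheme_le (ordinal_sum R\<^sub>1 R\<^sub>2) (ordinal_sum S\<^sub>1 S\<^sub>2)"
  unfolding scheme_le_iff_Gamma_preserving
proof (intro allI impI)
  fix G :: "nat digraph"
  assume G: "is_poset G"
  obtain \<rho>\<^sub>1 where \<rho>\<^sub>1: "\<And>H :: nat digraph. is_poset H \<or> H = ({}, {}) \<Longrightarrow> Gamma_preserving H R\<^sub>1 S\<^sub>1 (\<rho>\<^sub>1 H)"
    using assms(1) by (rule scheme_le_choice) (rule that)
  obtain \<rho>\<^sub>2 where \<rho>\<^sub>2: "\<And>H :: nat digraph. is_poset H \<or> H = ({}, {}) \<Longrightarrow> Gamma_preserving H R\<^sub>2 S\<^sub>2 (\<rho>\<^sub>2 H)"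
    using assms(2) by (rule scheme_le_choice) (rule that)
  have induced: "is_poset (induced G X) \<or> induced G X = ({}, {})" if "X \<subseteq> verts G" for X
    using is_poset_induced[OF G that] by (cases "X = {}") auto
  have "arcs G \<subseteq> verts G \<times> verts G"
    using G by (simp add: is_poset_def is_digraph_def)
  from Gamma_preserving_ordinal_sum[OF this, of R\<^sub>1 S\<^sub>1 "\<lambda>X. \<rho>\<^sub>1 (induced G X)"
      R\<^sub>2 S\<^sub>2 "\<lambda>X. \<rho>\<^sub>2 (induced G X)"]
  show "\<exists>\<rho>. Gamma_preserving G (ordinal_sum R\<^sub>1 R\<^sub>2) (ordinal_sum S\<^sub>1 S\<^sub>2) \<rho>"
    using \<rho>\<^sub>1 \<rho>\<^sub>2 induced by blast
qed

theorem corollary8: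
  fixes R1 :: "'a digraph" and S1 :: "'c digraph"
    and R2 :: "'b digraph" and S2 :: "'d digraph"
  assumes "is_poset R1" and "is_poset R2" and "is_poset S1" and "is_poset S2"
    and "scheme_le R1 S1" and "scheme_le R2 S2"
  shows "scheme_le (ordinal_sum R1 R2) (ordinal_sum S1 S2)"
  using assms(5,6) by (rule scheme_le_ordinal_sum)

end
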